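(* Fix device $n$, a slot $t$ in frame $k$ with freezing percentage $\gamma_n^k\in[0,1]$, control parameter $V\ge0$, queue value $Q_n^{kT}>0$ and observed channel gain $h_n^t>0$, and assume $\tau_n^{\mathrm{cmp},t}<\tau_0$. Consider the per-slot problem $\min_{0\le p_n^t\le\overline{P}_n}\ VX_n^t+Q_n^{kT}E_n^t$. An optimal transmit power is $$p_n^{t,*}=\begin{cases}p_{n,\min}^t,&\text{if }p_{n,\min}^t\le p_{n,\max}^k,\\0,&\text{otherwise,}\end{cases}$$ where $$p_{n,\min}^t=\frac{N_0}{h_n^t}\Big(2^{\frac{(1-\gamma_n^k)S}{W(\tau_0-\tau_n^{\mathrm{cmp},t})}}-1\Big),\qquad p_{n,\max}^k=\Big[\frac{(VB_n\lambda-e_n^{\mathrm{cmp}}Q_n^{kT})(1-\gamma_n^k)}{Q_n^{kT}(\tau_0-\tau_n^{\mathrm{cmp},k})}\Big]_0^{\overline{P}_n},$$ with $[x]_a^b=\min\{\max\{x,a\},b\}$, $e_n^{\mathrm{cmp}}=\frac{\alpha_nc_nB_nf_n^2}{2}$, and $\tau_n^{\mathrm{cmp},k}=\tau_n^{\mathrm{cmp},t}$ the (frame-constant) computation latency.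
   Context: Device $n$ with $B_n$ training samples, CPU frequency $f_n$, $c_n$ cycles per sample and effective capacitance $\alpha_n$ trains with a fraction $\gamma_n^k$ of its parameters frozen: computation latency $\tau_n^{\mathrm{cmp},t}=(1-\gamma_n^k)c_nB_n/f_n$ and computation energy $E_n^{\mathrm{cmp},t}=\frac{\alpha_n}{2}(1-\gamma_n^k)c_nB_nf_n^2$. With transmit power $p$, bandwidth $W$, noise power $N_0$, channel gain $h_n^t$, the rate is $r=W\log_2(1+ph_n^t/N_0)$, upload latency $\tau_n^{\mathrm{com},t}=(1-\gamma_n^k)S/r$ and communication energy $E_n^{\mathrm{com},t}=p(1-\gamma_n^k)S/r$, where $S$ is the full gradient size in bits. The upload succeeds ($\mathbb{1}_n^t=1$) iff $\tau_n^{\mathrm{cmp},t}+\tau_n^{\mathrm{com},t}\le\tau_0$ for a per-round latency $\tau_0$; $\overline{P}_n$ is the peak power. The penalty is $X_n^t=\lambda\mathbb{1}_n^tB_n(\gamma_n^k-1)$ with constant $\lambda>0$. For $p>0$ the energy is $E_n^t=E_n^{\mathrm{cmp},t}+E_n^{\mathrm{com},t}$; choosing $p=0$ means the device drops out of training in this slot, so $\mathbb{1}_n^t=0$, $X_n^t=0$ and $E_n^t=0$. *)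

theory Defs
  imports Complex_Main
begin

definition clip :: "real \<Rightarrow> real \<Rightarrow> real \<Rightarrow> real" where
  "clip a b x = min (max x a) b"

definition rate :: "real \<Rightarrow> real \<Rightarrow> real \<Rightarrow> real \<Rightarrow> real" where
  "rate W N0 h p = W * log 2 (1 + p * h / N0)"

definition tau_cmp :: "real \<Rightarrow> real \<Rightarrow> real \<Rightarrow> real \<Rightarrow> real" where
  "tau_cmp gamma c B f = (1 - gamma) * c * B / f"

definition E_cmp :: "real \<Rightarrow> real \<Rightarrow> real \<Rightarrow> real \<Rightarrow> real \<Rightarrow> real" where
  "E_cmp alpha gamma c B f = alpha / 2 * (1 - gamma) * c * B * f ^ 2"

definition tau_com :: "real \<Rightarrow> real \<Rightarrow> real \<Rightarrow> real" where
  "tau_com gamma S r = (1 - gamma) * S / r"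

definition E_com :: "real \<Rightarrow> real \<Rightarrow> real \<Rightarrow> real \<Rightarrow> real" where
  "E_com p gamma S r = p * (1 - gamma) * S / r"

text \<open>Per-slot objective V X + Q E as a function of the transmit power p.
  For p = 0 the device drops out: indicator 0, X = 0, E = 0.
  For p > 0 the upload succeeds iff tau_cmp + tau_com \<le> tau0,
  X = lambda * indicator * B * (gamma - 1), E = E_cmp + E_com.\<close>
definition slot_cost ::
  "real \<Rightarrow> real \<Rightarrow> real \<Rightarrow> real \<Rightarrow> real \<Rightarrow> real \<Rightarrow> real \<Rightarrow> real \<Rightarrow> real \<Rightarrow> real
   \<Rightarrow> real \<Rightarrow> real \<Rightarrow> real \<Rightarrow> real \<Rightarrow> real" where
  "slot_cost V Q lambda B c f alpha S W N0 h tau0 gamma p =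
     (if p = 0 then 0 else
      (let r = rate W N0 h p;
           ind = (if tau_cmp gamma c B f + tau_com gamma S r \<le> tau0 then (1::real) else 0);
           X = lambda * ind * B * (gamma - 1);
           E = E_cmp alpha gamma c B f + E_com p gamma S r
       in V * X + Q * E))"

definition p_min :: "real \<Rightarrow> real \<Rightarrow> real \<Rightarrow> real \<Rightarrow> real \<Rightarrow> real \<Rightarrow> real \<Rightarrow> real \<Rightarrow> real \<Rightarrow> real" where
  "p_min B c f S W N0 h tau0 gamma =
     N0 / h * (2 powr ((1 - gamma) * S / (W * (tau0 - tau_cmp gamma c B f))) - 1)"

definition e_cmp :: "real \<Rightarrow> real \<Rightarrow> real \<Rightarrow> real \<Rightarrow> real" where
  "e_cmp alpha c B f = alpha * c * B * f ^ 2 / 2"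

definition p_max :: "real \<Rightarrow> real \<Rightarrow> real \<Rightarrow> real \<Rightarrow> real \<Rightarrow> real \<Rightarrow> real \<Rightarrow> real \<Rightarrow> real \<Rightarrow> real \<Rightarrow> real" where
  "p_max V Q lambda B c f alpha tau0 Pbar gamma =
     clip 0 Pbar ((V * B * lambda - e_cmp alpha c B f * Q) * (1 - gamma)
                  / (Q * (tau0 - tau_cmp gamma c B f)))"

end

theory Submission
  imports Defs "HOL-Analysis.Analysis"
begin

text \<open>For a positive power the cost is an energy term plus, when the upload meets the deadline,
  the nonpositive penalty \<open>V \<lambda> B (\<gamma> - 1)\<close>. Meeting the deadline is equivalent to \<open>p_min \<le> p\<close>, and the energy
  per transmitted bit \<open>p / rate p\<close> grows with \<open>p\<close> because the rate is concave and vanishes at 0.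
  Hence among successful powers \<open>p_min\<close> is best, every failing power costs at least as much as
  dropping out (cost 0), and \<open>p_min\<close> beats dropping out exactly when \<open>p_min \<le> p_max\<close>.\<close>

lemma threshold_cost_minimum:
  fixes C \<epsilon> :: "real \<Rightarrow> real" and a pm P p :: real
  assumes C0: "C 0 = 0" and pm: "pm > 0"
    and C: "\<And>p. p > 0 \<Longrightarrow> C p = (if pm \<le> p then \<epsilon> p - a else \<epsilon> p)"
    and \<epsilon>_nonneg: "\<And>p. p > 0 \<Longrightarrow> \<epsilon> p \<ge> 0"
    and \<epsilon>_mono: "mono_on {0<..} \<epsilon>"
    and p: "0 \<le> p" "p \<le> P"
  shows "C (if pm \<le> P \<and> C pm \<le> 0 then pm else 0) \<le> C p"
proof -
  let ?pstar = "if pm \<le> P \<and> C pm \<le> 0 then pm else 0"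
  have star_nonpos: "C ?pstar \<le> 0" using C0 by auto
  consider "p = 0" | "0 < p" "p < pm" | "pm \<le> p" using p by linarith
  then show ?thesis
  proof cases
    case 1
    then show ?thesis using star_nonpos C0 by simp
  next
    case 2
    then show ?thesis using star_nonpos C \<epsilon>_nonneg by fastforce
  next
    case 3
    have "\<epsilon> pm \<le> \<epsilon> p" using \<epsilon>_mono pm 3 by (auto elim: mono_onD)
    then have "C pm \<le> C p" using C pm 3 by simp
    then show ?thesis using 3 p C0 by auto
  qed
qed

lemma ln_one_plus_concave_ratio:
  fixes a p q :: real
  assumes "a \<ge> 0" "0 < q" "q \<le> p"
  shows "q * ln (1 + a * p) \<le> p * ln (1 + a * q)"
proof -
  define t where "t = q / p"
  have p: "p > 0" using assms by linarith
  have t: "0 \<le> t" "t \<le> 1" using assms p by (auto simp: t_def)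
  have "1 + a * p \<in> {0<..}" using assms p by (simp add: add_pos_nonneg)
  then have "(1 - t) * ln 1 + t * ln (1 + a * p) \<le> ln ((1 - t) *\<^sub>R 1 + t *\<^sub>R (1 + a * p))"
    by (intro concave_onD[OF ln_concave t]) auto
  also have "(1 - t) *\<^sub>R 1 + t *\<^sub>R (1 + a * p) = 1 + a * q"
    using p by (simp add: t_def field_simps)
  finally have "p * (t * ln (1 + a * p)) \<le> p * ln (1 + a * q)"
    using p by simp
  then show ?thesis using p by (simp add: t_def)
qed

lemma rate_pos:
  assumes "W > 0" "N0 > 0" "h > 0" "p > 0"
  shows "rate W N0 h p > 0"
proof -
  have "1 < 1 + p * h / N0" using assms by simp
  then have "0 < log 2 (1 + p * h / N0)" by simp
  then show ?thesis using assms by (simp add: rate_def)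
qed

lemma rate_ge_iff:
  assumes W: "W > 0" and N0: "N0 > 0" and h: "h > 0" and p: "p \<ge> 0"
  shows "W * y \<le> rate W N0 h p \<longleftrightarrow> N0 / h * (2 powr y - 1) \<le> p"
proof -
  have "0 < 1 + p * h / N0" using assms by (simp add: add_pos_nonneg)
  have "W * y \<le> rate W N0 h p \<longleftrightarrow> y \<le> log 2 (1 + p * h / N0)"
    using W by (simp add: rate_def)
  also have "\<dots> \<longleftrightarrow> 2 powr y \<le> 1 + p * h / N0"
    using \<open>0 < 1 + p * h / N0\<close> by (simp add: le_log_iff)
  also have "\<dots> \<longleftrightarrow> N0 / h * (2 powr y - 1) \<le> p"
    using N0 h by (simp add: field_simps)
  finally show ?thesis .
qed

lemma rate_inverse:
  assumes "N0 \<noteq> 0" "h \<noteq> 0"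
  shows "rate W N0 h (N0 / h * (2 powr y - 1)) = W * y"
  using assms by (simp add: rate_def)

lemma mono_on_power_div_rate:
  assumes W: "W > 0" and N0: "N0 > 0" and h: "h > 0"
  shows "mono_on {0<..} (\<lambda>p. p / rate W N0 h p)"
proof (rule mono_onI)
  fix q p :: real
  assume "q \<in> {0<..}" "p \<in> {0<..}" "q \<le> p"
  then have q: "q > 0" and p: "p > 0" by auto
  have rate_ln: "rate W N0 h x = W / ln 2 * ln (1 + h / N0 * x)" for x
    by (simp add: rate_def log_def mult.commute)
  have "q * ln (1 + h / N0 * p) \<le> p * ln (1 + h / N0 * q)"
    using N0 h q \<open>q \<le> p\<close> by (intro ln_one_plus_concave_ratio) auto
  then have "W / ln 2 * (q * ln (1 + h / N0 * p)) \<le> W / ln 2 * (p * ln (1 + h / N0 * q))"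
    by (rule mult_left_mono) (use W in simp)
  then have "q * rate W N0 h p \<le> p * rate W N0 h q"
    by (simp add: rate_ln mult.left_commute)
  then show "q / rate W N0 h q \<le> p / rate W N0 h p"
    using rate_pos[OF W N0 h p] rate_pos[OF W N0 h q] by (simp add: divide_simps mult.commute)
qed

lemma slot_cost_nonzero:
  assumes "p \<noteq> 0"
  shows "slot_cost V Q lambda B c f alpha S W N0 h tau0 gamma p =
    (if tau_cmp gamma c B f + (1 - gamma) * S / rate W N0 h p \<le> tau0
     then V * lambda * B * (gamma - 1) else 0)
    + Q * (E_cmp alpha gamma c B f + (1 - gamma) * S * (p / rate W N0 h p))"
  using assms by (simp add: slot_cost_def tau_com_def E_com_def Let_def)

lemma deadline_met_iff_p_min_le:
  assumes W: "W > 0" and N0: "N0 > 0" and h: "h > 0" and p: "p > 0"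
    and lat: "tau_cmp gamma c B f < tau0"
  shows "tau_cmp gamma c B f + (1 - gamma) * S / rate W N0 h p \<le> tau0
     \<longleftrightarrow> p_min B c f S W N0 h tau0 gamma \<le> p"
proof -
  define D where "D = tau0 - tau_cmp gamma c B f"
  have D: "D > 0" using lat by (simp add: D_def)
  have r: "rate W N0 h p > 0" using rate_pos[OF W N0 h p] .
  have "tau_cmp gamma c B f + (1 - gamma) * S / rate W N0 h p \<le> tau0
      \<longleftrightarrow> (1 - gamma) * S \<le> D * rate W N0 h p"
    using r by (simp add: D_def field_simps)
  also have "\<dots> \<longleftrightarrow> W * ((1 - gamma) * S / (W * D)) \<le> rate W N0 h p"
    using W D by (simp add: pos_divide_le_eq mult.commute)
  also have "\<dots> \<longleftrightarrow> p_min B c f S W N0 h tau0 gamma \<le> p"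
    unfolding p_min_def D_def by (rule rate_ge_iff[OF W N0 h]) (use p in simp)
  finally show ?thesis .
qed

lemma mono_on_slot_energy:
  assumes "W > 0" "N0 > 0" "h > 0" "Q \<ge> 0" "gamma \<le> 1" "S \<ge> 0"
  shows "mono_on {0<..}
    (\<lambda>p. Q * (E_cmp alpha gamma c B f + (1 - gamma) * S * (p / rate W N0 h p)))"
proof (rule mono_onI)
  fix q p :: real
  assume "q \<in> {0<..}" "p \<in> {0<..}" "q \<le> p"
  then have "q / rate W N0 h q \<le> p / rate W N0 h p"
    using mono_on_power_div_rate[of W N0 h] assms by (auto elim: mono_onD)
  then have "(1 - gamma) * S * (q / rate W N0 h q) \<le> (1 - gamma) * S * (p / rate W N0 h p)"
    using assms by (intro mult_left_mono) auto
  then show "Q * (E_cmp alpha gamma c B f + (1 - gamma) * S * (q / rate W N0 h q))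
      \<le> Q * (E_cmp alpha gamma c B f + (1 - gamma) * S * (p / rate W N0 h p))"
    using assms by (intro mult_left_mono) auto
qed

lemma p_min_pos:
  assumes "S > 0" "W > 0" "N0 > 0" "h > 0" "gamma < 1"
    and "tau_cmp gamma c B f < tau0"
  shows "p_min B c f S W N0 h tau0 gamma > 0"
proof -
  have "0 < (1 - gamma) * S / (W * (tau0 - tau_cmp gamma c B f))"
    using assms by simp
  then have "1 < 2 powr ((1 - gamma) * S / (W * (tau0 - tau_cmp gamma c B f)))"
    by (simp add: gr_one_powr)
  then show ?thesis using assms by (simp add: p_min_def)
qed

lemma slot_cost_p_min:
  assumes W: "W > 0" and N0: "N0 > 0" and h: "h > 0" and S: "S > 0" and gamma: "gamma < 1"
    and lat: "tau_cmp gamma c B f < tau0"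
  shows "slot_cost V Q lambda B c f alpha S W N0 h tau0 gamma (p_min B c f S W N0 h tau0 gamma)
    = Q * (E_cmp alpha gamma c B f + (tau0 - tau_cmp gamma c B f) * p_min B c f S W N0 h tau0 gamma)
      - V * lambda * B * (1 - gamma)"
proof -
  let ?pm = "p_min B c f S W N0 h tau0 gamma"
  have pm: "?pm > 0" using p_min_pos[OF S W N0 h gamma lat] .
  have "rate W N0 h ?pm = W * ((1 - gamma) * S / (W * (tau0 - tau_cmp gamma c B f)))"
    unfolding p_min_def by (rule rate_inverse) (use N0 h in auto)
  also have "\<dots> = (1 - gamma) * S / (tau0 - tau_cmp gamma c B f)"
    using W by simp
  finally have "rate W N0 h ?pm = (1 - gamma) * S / (tau0 - tau_cmp gamma c B f)" .
  then have energy: "(1 - gamma) * S * (?pm / rate W N0 h ?pm) = (tau0 - tau_cmp gamma c B f) * ?pm"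
    using S gamma lat by simp
  have "tau_cmp gamma c B f + (1 - gamma) * S / rate W N0 h ?pm \<le> tau0"
    using deadline_met_iff_p_min_le[OF W N0 h pm lat] by simp
  then have "slot_cost V Q lambda B c f alpha S W N0 h tau0 gamma ?pm
      = V * lambda * B * (gamma - 1) + Q * (E_cmp alpha gamma c B f + (1 - gamma) * S * (?pm / rate W N0 h ?pm))"
    using pm by (subst slot_cost_nonzero) auto
  then show ?thesis
    by (simp only: energy) (simp add: algebra_simps)
qed

lemma p_min_le_p_max_iff:
  assumes W: "W > 0" and N0: "N0 > 0" and h: "h > 0" and S: "S > 0" and gamma: "gamma < 1"
    and Q: "Q > 0" and lat: "tau_cmp gamma c B f < tau0"
  shows "p_min B c f S W N0 h tau0 gamma \<le> p_max V Q lambda B c f alpha tau0 Pbar gamma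
    \<longleftrightarrow> p_min B c f S W N0 h tau0 gamma \<le> Pbar
      \<and> slot_cost V Q lambda B c f alpha S W N0 h tau0 gamma (p_min B c f S W N0 h tau0 gamma) \<le> 0"
proof -
  let ?pm = "p_min B c f S W N0 h tau0 gamma"
  define D where "D = tau0 - tau_cmp gamma c B f"
  define x where "x = (V * B * lambda - e_cmp alpha c B f * Q) * (1 - gamma) / (Q * D)"
  have pm: "?pm > 0" using p_min_pos[OF S W N0 h gamma lat] .
  have QD: "Q * D > 0" using Q lat by (simp add: D_def)
  have E_cmp_eq: "E_cmp alpha gamma c B f = e_cmp alpha c B f * (1 - gamma)"
    by (simp add: E_cmp_def e_cmp_def)
  have "slot_cost V Q lambda B c f alpha S W N0 h tau0 gamma ?pm \<le> 0
      \<longleftrightarrow> ?pm * (Q * D) \<le> (V * B * lambda - e_cmp alpha c B f * Q) * (1 - gamma)"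
    by (simp add: slot_cost_p_min[OF W N0 h S gamma lat] E_cmp_eq D_def algebra_simps)
  also have "\<dots> \<longleftrightarrow> ?pm \<le> x"
    using QD by (simp add: x_def le_divide_eq)
  finally show ?thesis
    using pm by (auto simp: p_max_def clip_def x_def D_def)
qed

theorem proposition1:
  fixes V Q lambda B c f alpha S W N0 h tau0 Pbar gamma :: real
  assumes B_pos: "B > 0" and c_pos: "c > 0" and f_pos: "f > 0" and alpha_pos: "alpha > 0"
    and S_pos: "S > 0" and W_pos: "W > 0" and N0_pos: "N0 > 0" and lambda_pos: "lambda > 0"
    and tau0_pos: "tau0 > 0" and Pbar_pos: "Pbar > 0"
    and gamma: "0 \<le> gamma" "gamma \<le> 1"
    and V: "V \<ge> 0" and Q: "Q > 0" and h: "h > 0"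
    and lat: "tau_cmp gamma c B f < tau0"
  shows "let pmin = p_min B c f S W N0 h tau0 gamma;
             pmax = p_max V Q lambda B c f alpha tau0 Pbar gamma;
             pstar = (if pmin \<le> pmax then pmin else 0)
         in 0 \<le> pstar \<and> pstar \<le> Pbar \<and>
            (\<forall>p. 0 \<le> p \<and> p \<le> Pbar \<longrightarrow>
               slot_cost V Q lambda B c f alpha S W N0 h tau0 gamma pstar
                 \<le> slot_cost V Q lambda B c f alpha S W N0 h tau0 gamma p)"
proof (cases "gamma = 1")
  case True
  then have "slot_cost V Q lambda B c f alpha S W N0 h tau0 gamma p = 0" for p
    by (simp add: slot_cost_def E_cmp_def E_com_def Let_def)
  moreover have "p_min B c f S W N0 h tau0 gamma = 0" "p_max V Q lambda B c f alpha tau0 Pbar gamma = 0"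
    using True Pbar_pos by (simp_all add: p_min_def p_max_def clip_def)
  ultimately show ?thesis using Pbar_pos by (simp add: Let_def)
next
  case False
  then have gamma_lt: "gamma < 1" using gamma by simp
  let ?pm = "p_min B c f S W N0 h tau0 gamma"
  let ?C = "slot_cost V Q lambda B c f alpha S W N0 h tau0 gamma"
  let ?\<epsilon> = "\<lambda>p. Q * (E_cmp alpha gamma c B f + (1 - gamma) * S * (p / rate W N0 h p))"
  have pm: "?pm > 0" using p_min_pos[OF S_pos W_pos N0_pos h gamma_lt lat] .
  have cost: "?C p = (if ?pm \<le> p then ?\<epsilon> p - V * lambda * B * (1 - gamma) else ?\<epsilon> p)"
    if "p > 0" for p
    using that slot_cost_nonzero deadline_met_iff_p_min_le[OF W_pos N0_pos h that lat]
    by (simp add: algebra_simps)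
  have energy_nonneg: "?\<epsilon> p \<ge> 0" if "p > 0" for p
    using that rate_pos[OF W_pos N0_pos h that] Q gamma S_pos alpha_pos c_pos B_pos f_pos
    by (simp add: E_cmp_def)
  have "?C (if ?pm \<le> Pbar \<and> ?C ?pm \<le> 0 then ?pm else 0) \<le> ?C p" if "0 \<le> p" "p \<le> Pbar" for p
    using threshold_cost_minimum[OF _ pm cost energy_nonneg _ that]
      mono_on_slot_energy[OF W_pos N0_pos h _ gamma(2)] Q S_pos
    by (simp add: slot_cost_def)
  then show ?thesis
    using p_min_le_p_max_iff[OF W_pos N0_pos h S_pos gamma_lt Q lat] pm Pbar_pos
    by (auto simp: Let_def)
qed

end
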